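(* Let $n,m\ge1$, $c_1,\dots,c_n>0$, $T>0$, $\epsilon>0$, $\kappa_{ij}\ge0$, $\bar r_1,\dots,\bar r_m>0$, $R=\prod_i[0,\bar r_i]$. For each $i$ let $U_i:[0,\bar r_i]\to\mathbb{R}$ be continuous, nondecreasing and strictly concave. Let $\varphi^i_\epsilon(\mu)=-\epsilon\log\sum_je^{-(\kappa_{ij}+\mu_j)/\epsilon}$ and define on $R\times[0,T)^n$ $$W(r,\mu)=\sum_i\big[r_i\varphi^i_\epsilon(\mu)-U_i(r_i)\big]+\sum_jc_j\log\Big(1-\frac{\mu_j}{T}\Big).$$ Let $\mathcal{C}(r)$ be the minimum of $\sum_{i,j}\kappa_{ij}x_{ij}+\sum_j\beta_j(q_j)+\epsilon\sum_{i,j}x_{ij}\log(x_{ij}/r_i)$ over $x_{ij}\ge0$, $\sum_jx_{ij}=r_i$, $\sum_ix_{ij}=q_j/T$ (with $\beta_j(q)=0$ for $q\le c_j$, $\beta_j(q)=q-c_j-c_j\log(q/c_j)$ for $q>c_j$), and let $\psi(r)=\mathcal{C}(r)-\sum_iU_i(r_i)$. Then there exists a unique $(r^*,\mu^* )\in R\times[0,T)^n$ such that $$W(r^*,\mu)\le W(r^*,\mu^* )\le W(r,\mu^* )\quad\forall r\in R,\ \mu\in[0,T)^n.$$ Furthermore, $r^*=\arg\min_{r\in R}\psi(r)$.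
   Context: Convention $0\log0=0$ (terms with $x_{ij}=0$ contribute zero). The $U_i$ are utility functions modeling elastic EV charging demand; strict concavity on $[0,\bar r_i]$ is the paper's standing Assumption 1. *)

theory Defs
  imports "HOL-Analysis.Analysis" "HOL-Library.FuncSet"
begin

definition strict_concave_on :: "real set \<Rightarrow> (real \<Rightarrow> real) \<Rightarrow> bool" where
  "strict_concave_on S f \<longleftrightarrow>
     (\<forall>x\<in>S. \<forall>y\<in>S. x \<noteq> y \<longrightarrow> (\<forall>t::real. 0 < t \<and> t < 1 \<longrightarrow>
        f ((1 - t) * x + t * y) > (1 - t) * f x + t * f y))"

text \<open>Indices: i ranges over {..<m} (demands r_i), j over {..<n} (prices mu_j).\<close>

definition phi :: "nat \<Rightarrow> real \<Rightarrow> (nat \<Rightarrow> nat \<Rightarrow> real) \<Rightarrow> nat \<Rightarrow> (nat \<Rightarrow> real) \<Rightarrow> real" where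
  "phi n \<epsilon> \<kappa> i \<mu> = - \<epsilon> * ln (\<Sum>j<n. exp (- (\<kappa> i j + \<mu> j) / \<epsilon>))"

definition W :: "nat \<Rightarrow> nat \<Rightarrow> (nat \<Rightarrow> real) \<Rightarrow> real \<Rightarrow> real \<Rightarrow> (nat \<Rightarrow> nat \<Rightarrow> real)
                 \<Rightarrow> (nat \<Rightarrow> real \<Rightarrow> real) \<Rightarrow> (nat \<Rightarrow> real) \<Rightarrow> (nat \<Rightarrow> real) \<Rightarrow> real" where
  "W n m c T \<epsilon> \<kappa> U r \<mu> =
     (\<Sum>i<m. r i * phi n \<epsilon> \<kappa> i \<mu> - U i (r i)) + (\<Sum>j<n. c j * ln (1 - \<mu> j / T))"

definition beta :: "real \<Rightarrow> real \<Rightarrow> real" where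
  "beta cj q = (if q \<le> cj then 0 else q - cj - cj * ln (q / cj))"

definition xlogx :: "real \<Rightarrow> real \<Rightarrow> real" where
  "xlogx x r = (if x = 0 then 0 else x * ln (x / r))"

text \<open>Feasible transport plans for demand r (q_j := T * sum_i x_ij is eliminated).\<close>
definition feasible :: "nat \<Rightarrow> nat \<Rightarrow> (nat \<Rightarrow> real) \<Rightarrow> (nat \<Rightarrow> nat \<Rightarrow> real) \<Rightarrow> bool" where
  "feasible n m r x \<longleftrightarrow> (\<forall>i<m. \<forall>j<n. 0 \<le> x i j) \<and> (\<forall>i<m. (\<Sum>j<n. x i j) = r i)"

definition cost :: "nat \<Rightarrow> nat \<Rightarrow> (nat \<Rightarrow> real) \<Rightarrow> real \<Rightarrow> real \<Rightarrow> (nat \<Rightarrow> nat \<Rightarrow> real)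
                    \<Rightarrow> (nat \<Rightarrow> real) \<Rightarrow> (nat \<Rightarrow> nat \<Rightarrow> real) \<Rightarrow> real" where
  "cost n m c T \<epsilon> \<kappa> r x =
     (\<Sum>i<m. \<Sum>j<n. \<kappa> i j * x i j) + (\<Sum>j<n. beta (c j) (T * (\<Sum>i<m. x i j)))
     + \<epsilon> * (\<Sum>i<m. \<Sum>j<n. xlogx (x i j) (r i))"

text \<open>C(r): the minimum of the cost over feasible plans (attained; written as Inf).\<close>
definition Cmin :: "nat \<Rightarrow> nat \<Rightarrow> (nat \<Rightarrow> real) \<Rightarrow> real \<Rightarrow> real \<Rightarrow> (nat \<Rightarrow> nat \<Rightarrow> real)
                    \<Rightarrow> (nat \<Rightarrow> real) \<Rightarrow> real" where
  "Cmin n m c T \<epsilon> \<kappa> r = (INF x \<in> {x. feasible n m r x}. cost n m c T \<epsilon> \<kappa> r x)"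

definition psi :: "nat \<Rightarrow> nat \<Rightarrow> (nat \<Rightarrow> real) \<Rightarrow> real \<Rightarrow> real \<Rightarrow> (nat \<Rightarrow> nat \<Rightarrow> real)
                    \<Rightarrow> (nat \<Rightarrow> real \<Rightarrow> real) \<Rightarrow> (nat \<Rightarrow> real) \<Rightarrow> real" where
  "psi n m c T \<epsilon> \<kappa> U r = Cmin n m c T \<epsilon> \<kappa> r - (\<Sum>i<m. U i (r i))"

end

theory Submission
  imports Defs
begin

(*
  W is strictly convex in r, through the strictly concave U_i, and strictly concave in mu, through
  the logarithmic barrier (each phi_i is a concave soft-min).  For fixed mu the best response r(mu)
  is unique and depends continuously on mu, so the dual function D(mu) = W(r(mu), mu) is continuous;
  it tends to -infinity as some mu_j approaches T and therefore attains its maximum at some mu_s.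
  A Danskin-type argument shows that (r(mu_s), mu_s) is a saddle point, and strict convexity and
  concavity make it the only one.  Finally W(r, mu) <= psi(r) for all mu by weak duality (Gibbs'
  variational principle for the entropic term, Fenchel-Young for beta_j), with equality at the
  saddle point, where the Gibbs plan satisfies the first-order conditions in mu_s; hence r_s
  minimises psi, and uniquely so because r_s is the unique best response to mu_s.
*)

section \<open>Minimising a linear function minus a strictly concave one\<close>

definition conj_argmin :: "real \<Rightarrow> (real \<Rightarrow> real) \<Rightarrow> real \<Rightarrow> real" where
  "conj_argmin b f a = (THE y. y \<in> {0..b} \<and> (\<forall>z\<in>{0..b}. a * y - f y \<le> a * z - f z))"

lemma strict_concave_on_min_unique:
  assumes conc: "strict_concave_on {0..b} f"
    and y: "y \<in> {0..b}" "\<forall>z\<in>{0..b}. a * y - f y \<le> a * z - f z"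
    and y': "y' \<in> {0..b}" "\<forall>z\<in>{0..b}. a * y' - f y' \<le> a * z - f z"
  shows "y = y'"
proof (rule ccontr)
  assume "y \<noteq> y'"
  define z where "z = (1 - 1/2) * y + (1/2) * y'"
  have "z \<in> {0..b}" using y y' unfolding z_def by auto
  moreover have "f z > (1 - 1/2) * f y + (1/2) * f y'"
    using conc[unfolded strict_concave_on_def, rule_format, of y y' "1/2"] \<open>y \<noteq> y'\<close> y y'
    unfolding z_def by auto
  moreover have "a * y - f y \<le> a * z - f z" "a * y' - f y' \<le> a * z - f z"
    using y y' \<open>z \<in> {0..b}\<close> by auto
  ultimately show False unfolding z_def by (simp add: algebra_simps)
qed

lemma conj_argmin:
  assumes "0 \<le> b" "continuous_on {0..b} f" "strict_concave_on {0..b} f"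
  shows "conj_argmin b f a \<in> {0..b}"
    and "z \<in> {0..b} \<Longrightarrow> a * conj_argmin b f a - f (conj_argmin b f a) \<le> a * z - f z"
proof -
  have "continuous_on {0..b} (\<lambda>y. a * y - f y)"
    by (intro continuous_intros assms)
  moreover have "{0..b} \<noteq> {}" using assms(1) by simp
  ultimately obtain y where "y \<in> {0..b}" "\<forall>z\<in>{0..b}. a * y - f y \<le> a * z - f z"
    using continuous_attains_inf[OF compact_Icc] by blast
  then have "\<exists>!y. y \<in> {0..b} \<and> (\<forall>z\<in>{0..b}. a * y - f y \<le> a * z - f z)"
    using strict_concave_on_min_unique[OF assms(3)] by blast
  from theI'[OF this] show "conj_argmin b f a \<in> {0..b}"
    and "z \<in> {0..b} \<Longrightarrow> a * conj_argmin b f a - f (conj_argmin b f a) \<le> a * z - f z"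
    unfolding conj_argmin_def by blast+
qed

lemma conj_argmin_eqI:
  assumes "0 \<le> b" "continuous_on {0..b} f" "strict_concave_on {0..b} f"
    and "y \<in> {0..b}" "\<forall>z\<in>{0..b}. a * y - f y \<le> a * z - f z"
  shows "conj_argmin b f a = y"
  using strict_concave_on_min_unique[OF assms(3) conj_argmin(1)[OF assms(1-3)] _ assms(4,5)]
    conj_argmin(2)[OF assms(1-3)] by blast

text \<open>Closed graph with values in the compact interval [0, b].\<close>
lemma continuous_conj_argmin:
  assumes "0 \<le> b" "continuous_on {0..b} f" "strict_concave_on {0..b} f"
  shows "continuous_on UNIV (conj_argmin b f)"
proof (rule continuous_from_closed_graph[OF compact_Icc])
  show "conj_argmin b f \<in> UNIV \<rightarrow> {0..b}" using conj_argmin(1)[OF assms] by blast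
  have graph: "range (\<lambda>a. (a, conj_argmin b f a)) =
      (\<Inter>z\<in>{0..b}. {p \<in> UNIV \<times> {0..b}. fst p * snd p - f (snd p) \<le> fst p * z - f z})"
    (is "_ = ?G")
  proof (intro equalityI subsetI)
    fix p assume "p \<in> range (\<lambda>a. (a, conj_argmin b f a))"
    then show "p \<in> ?G" using conj_argmin[OF assms] by auto
  next
    fix p assume p: "p \<in> ?G"
    obtain a y where p_eq: "p = (a, y)" by (cases p)
    have "y \<in> {0..b}" "\<forall>z\<in>{0..b}. a * y - f y \<le> a * z - f z"
      using p assms(1) unfolding p_eq by auto
    then have "conj_argmin b f a = y" by (rule conj_argmin_eqI[OF assms])
    then show "p \<in> range (\<lambda>a. (a, conj_argmin b f a))" unfolding p_eq by auto
  qed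
  have cont: "continuous_on (UNIV \<times> {0..b}) (\<lambda>p. fst p * snd p - f (snd p))"
    by (intro continuous_intros continuous_on_compose2[OF assms(2)]) auto
  have "continuous_on (UNIV \<times> {0..b}) (\<lambda>p. fst p * z - f z)" for z
    by (intro continuous_intros)
  with cont show "closed (range (\<lambda>a. (a, conj_argmin b f a)))"
    unfolding graph by (intro closed_INT ballI continuous_on_closed_Collect_le closed_Times) auto
qed

section \<open>Fenchel-Young, Gibbs and log-sum-exp inequalities\<close>

text \<open>beta c (T * q) is the supremum of \<mu> * q + c * ln (1 - \<mu> / T) over \<mu> \<in> [0, T).\<close>
lemma beta_fenchel_young:
  assumes "cj > 0" "T > 0" "\<mu> \<in> {0..<T}" "q \<ge> 0"
  shows "\<mu> * q + cj * ln (1 - \<mu> / T) \<le> beta cj (T * q)"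
proof (cases "T * q \<le> cj")
  case True
  have "q \<le> cj / T" using True assms(2) by (simp add: field_simps)
  then have "\<mu> * q \<le> \<mu> * (cj / T)" using assms(3) by (intro mult_left_mono) auto
  moreover have "ln (1 - \<mu> / T) \<le> - (\<mu> / T)"
    using ln_le_minus_one[of "1 - \<mu> / T"] assms(2,3) by simp
  then have "cj * ln (1 - \<mu> / T) \<le> cj * (- (\<mu> / T))" using assms(1) by (intro mult_left_mono) auto
  moreover have "\<mu> * (cj / T) = cj * (\<mu> / T)" by simp
  moreover have "beta cj (T * q) = 0" using True unfolding beta_def by simp
  ultimately show ?thesis by linarith
next
  case False
  then have "0 < T * q" using assms(1) by linarith
  then have q: "q > 0" using zero_less_mult_pos[of T q] assms(2) by blast
  define y where "y = (1 - \<mu> / T) * (T * q / cj)"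
  have pos: "1 - \<mu> / T > 0" "T * q / cj > 0" using assms(1-3) q by auto
  have "cj * ln y \<le> cj * (y - 1)"
    using ln_le_minus_one[OF mult_pos_pos[OF pos]] assms(1) unfolding y_def by (intro mult_left_mono) auto
  moreover have "cj * ln y = cj * ln (1 - \<mu> / T) + cj * ln (T * q / cj)"
    unfolding y_def ln_mult_pos[OF pos] by (simp add: distrib_left)
  moreover have "cj * (y - 1) = T * q - \<mu> * q - cj"
    unfolding y_def using assms(1,2) by (simp add: field_simps)
  moreover have "beta cj (T * q) = T * q - cj - cj * ln (T * q / cj)" using False unfolding beta_def by simp
  ultimately show ?thesis by linarith
qed

lemma beta_fenchel_young_eq:
  assumes "cj > 0" "T > 0" "\<mu> \<in> {0..<T}"
    and "q \<le> cj / (T - \<mu>)" and "0 < \<mu> \<Longrightarrow> q = cj / (T - \<mu>)"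
  shows "beta cj (T * q) = \<mu> * q + cj * ln (1 - \<mu> / T)"
proof (cases "0 < \<mu>")
  case True
  then have q: "q = cj / (T - \<mu>)" using assms(5) by simp
  have T\<mu>: "T - \<mu> > 0" using assms(3) by simp
  have "T * q - cj = \<mu> * q" unfolding q using T\<mu> by (simp add: field_simps)
  moreover have "T * q > cj" unfolding q using T\<mu> True assms(1) by (simp add: field_simps)
  moreover have "T * q / cj = inverse (1 - \<mu> / T)"
    unfolding q using T\<mu> assms(1,2) by (simp add: field_simps)
  moreover have "1 - \<mu> / T > 0" using T\<mu> assms(2) by (simp add: field_simps)
  ultimately show ?thesis unfolding beta_def by (simp add: ln_inverse)
next
  case False
  then have "\<mu> = 0" using assms(3) by simp
  moreover have "T * q \<le> cj" using assms(2,4) \<open>\<mu> = 0\<close> by (simp add: field_simps)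
  ultimately show ?thesis unfolding beta_def by simp
qed

text \<open>The inequality ln y \<ge> 1 - 1 / y at y = x * Z / (r * exp (- a / \<epsilon>)); summed over j it
  gives Gibbs' variational inequality.\<close>
lemma gibbs_variational_term:
  assumes "r > 0" "x \<ge> 0" "Z > 0" "\<epsilon> > 0"
  shows "\<epsilon> * (x - r * exp (- a / \<epsilon>) / Z) - \<epsilon> * x * ln Z \<le> a * x + \<epsilon> * xlogx x r"
proof (cases "x = 0")
  case True
  then show ?thesis using assms by (simp add: xlogx_def)
next
  case False
  then have x: "x > 0" using assms by simp
  define y where "y = x * Z / (r * exp (- a / \<epsilon>))"
  have y: "y > 0" unfolding y_def using x assms by simp
  have "1 - 1 / y \<le> ln y" using ln_le_minus_one[of "1 / y"] y by (simp add: ln_div)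
  then have "\<epsilon> * x * (1 - 1 / y) \<le> \<epsilon> * x * ln y" using x assms by (intro mult_left_mono) auto
  moreover have "\<epsilon> * x * (1 - 1 / y) = \<epsilon> * (x - r * exp (- a / \<epsilon>) / Z)"
    unfolding y_def using x assms by (simp add: field_simps)
  moreover have "\<epsilon> * x * ln y = a * x + \<epsilon> * xlogx x r + \<epsilon> * x * ln Z"
    unfolding y_def xlogx_def using x assms by (simp add: ln_div ln_mult field_simps)
  ultimately show ?thesis by linarith
qed

lemma gibbs_variational_le:
  fixes a x :: "'a \<Rightarrow> real"
  assumes "finite J" "J \<noteq> {}" "\<epsilon> > 0" "\<forall>j\<in>J. x j \<ge> 0" "(\<Sum>j\<in>J. x j) = r"
  shows "- \<epsilon> * r * ln (\<Sum>j\<in>J. exp (- a j / \<epsilon>)) \<le> (\<Sum>j\<in>J. a j * x j + \<epsilon> * xlogx (x j) r)"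
proof -
  define Z where "Z = (\<Sum>j\<in>J. exp (- a j / \<epsilon>))"
  have Z: "Z > 0" unfolding Z_def using assms(1,2) by (intro sum_pos) auto
  have r: "r \<ge> 0" using assms(4,5) sum_nonneg[of J x] by auto
  show ?thesis
  proof (cases "r = 0")
    case True
    then have "\<forall>j\<in>J. x j = 0" using assms(1,4,5) sum_nonneg_eq_0_iff[of J x] by auto
    then show ?thesis using True by (simp add: xlogx_def)
  next
    case False
    then have "r > 0" using r by simp
    have "(\<Sum>j\<in>J. \<epsilon> * (x j - r * exp (- a j / \<epsilon>) / Z) - \<epsilon> * x j * ln Z)
        \<le> (\<Sum>j\<in>J. a j * x j + \<epsilon> * xlogx (x j) r)"
      using \<open>r > 0\<close> Z assms(3,4) by (intro sum_mono gibbs_variational_term) auto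
    moreover have "(\<Sum>j\<in>J. \<epsilon> * (x j - r * exp (- a j / \<epsilon>) / Z) - \<epsilon> * x j * ln Z)
        = \<epsilon> * ((\<Sum>j\<in>J. x j) - r * Z / Z) - \<epsilon> * (\<Sum>j\<in>J. x j) * ln Z"
      unfolding Z_def
      by (simp add: sum_subtractf sum_distrib_left sum_distrib_right sum_divide_distrib right_diff_distrib)
    ultimately show ?thesis using assms(5) Z unfolding Z_def by simp
  qed
qed

lemma gibbs_variational_eq:
  fixes a :: "'a \<Rightarrow> real"
  assumes "finite J" "J \<noteq> {}" "\<epsilon> > 0" "r \<ge> 0"
  defines "Z \<equiv> (\<Sum>j\<in>J. exp (- a j / \<epsilon>))"
  shows "(\<Sum>j\<in>J. a j * (r * exp (- a j / \<epsilon>) / Z) + \<epsilon> * xlogx (r * exp (- a j / \<epsilon>) / Z) r)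
         = - \<epsilon> * r * ln Z"
proof (cases "r = 0")
  case True
  then show ?thesis by (simp add: xlogx_def)
next
  case False
  then have "r > 0" using assms(4) by simp
  have Z: "Z > 0" unfolding Z_def using assms(1,2) by (intro sum_pos) auto
  have "a j * (r * exp (- a j / \<epsilon>) / Z) + \<epsilon> * xlogx (r * exp (- a j / \<epsilon>) / Z) r
        = (- \<epsilon> * r * ln Z / Z) * exp (- a j / \<epsilon>)" for j
    unfolding xlogx_def using \<open>r > 0\<close> Z assms(3) by (simp add: ln_div field_simps)
  then have "(\<Sum>j\<in>J. a j * (r * exp (- a j / \<epsilon>) / Z) + \<epsilon> * xlogx (r * exp (- a j / \<epsilon>) / Z) r)
        = (- \<epsilon> * r * ln Z / Z) * Z"
    unfolding Z_def by (simp add: sum_distrib_left)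
  then show ?thesis using Z by simp
qed

lemma ln_sum_exp_convex:
  fixes a b :: "'a \<Rightarrow> real"
  assumes "finite J" "J \<noteq> {}" "0 \<le> t" "t \<le> 1"
  shows "ln (\<Sum>j\<in>J. exp ((1 - t) * a j + t * b j))
         \<le> (1 - t) * ln (\<Sum>j\<in>J. exp (a j)) + t * ln (\<Sum>j\<in>J. exp (b j))"
proof -
  define A where "A = ln (\<Sum>j\<in>J. exp (a j))"
  define B where "B = ln (\<Sum>j\<in>J. exp (b j))"
  have SA: "(\<Sum>j\<in>J. exp (a j)) = exp A" and SB: "(\<Sum>j\<in>J. exp (b j)) = exp B"
    unfolding A_def B_def using assms(1,2) by (auto intro!: exp_ln[symmetric] sum_pos)
  have "exp ((1 - t) * a j + t * b j)
      \<le> ((1 - t) * exp (a j - A) + t * exp (b j - B)) * exp ((1 - t) * A + t * B)" for j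
  proof -
    have "exp ((1 - t) * (a j - A) + t * (b j - B)) \<le> (1 - t) * exp (a j - A) + t * exp (b j - B)"
      using convex_onD[OF exp_convex, of t "a j - A" "b j - B"] assms(3,4) by simp
    moreover have "exp ((1 - t) * a j + t * b j)
        = exp ((1 - t) * (a j - A) + t * (b j - B)) * exp ((1 - t) * A + t * B)"
      unfolding mult_exp_exp by (simp add: algebra_simps)
    ultimately show ?thesis by (simp add: mult_right_mono)
  qed
  then have "(\<Sum>j\<in>J. exp ((1 - t) * a j + t * b j))
      \<le> (\<Sum>j\<in>J. ((1 - t) * exp (a j - A) + t * exp (b j - B)) * exp ((1 - t) * A + t * B))"
    by (intro sum_mono)
  also have "\<dots> = ((1 - t) * ((\<Sum>j\<in>J. exp (a j)) / exp A) + t * ((\<Sum>j\<in>J. exp (b j)) / exp B))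
      * exp ((1 - t) * A + t * B)"
    by (simp add: sum_distrib_right[symmetric] sum.distrib sum_distrib_left sum_divide_distrib exp_diff)
  also have "\<dots> = exp ((1 - t) * A + t * B)" unfolding SA SB by simp
  finally have le: "(\<Sum>j\<in>J. exp ((1 - t) * a j + t * b j)) \<le> exp ((1 - t) * A + t * B)" .
  have "0 < (\<Sum>j\<in>J. exp ((1 - t) * a j + t * b j))" using assms(1,2) by (intro sum_pos) auto
  then have "ln (\<Sum>j\<in>J. exp ((1 - t) * a j + t * b j)) \<le> ln (exp ((1 - t) * A + t * B))"
    using le by (subst ln_le_cancel_iff) auto
  then show ?thesis unfolding A_def B_def by simp
qed

lemma ln_midpoint_strict:
  fixes x y :: real
  assumes "x > 0" "y > 0" "x \<noteq> y"
  shows "(ln x + ln y) / 2 < ln ((x + y) / 2)"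
proof -
  have "x * y < ((x + y) / 2)\<^sup>2"
  proof -
    have "0 < (x - y)\<^sup>2" using assms by simp
    then show ?thesis by (simp add: power2_eq_square field_simps)
  qed
  then have "ln (x * y) < ln (((x + y) / 2)\<^sup>2)" using assms by simp
  then show ?thesis using assms by (simp add: ln_mult ln_realpow)
qed

lemma compact_PiE:
  fixes S :: "'a \<Rightarrow> 'b::topological_space set"
  assumes "\<And>i. i \<in> I \<Longrightarrow> compact (S i)"
  shows "compact (\<Pi>\<^sub>E i\<in>I. S i)"
proof -
  define S' where "S' i = (if i \<in> I then S i else {undefined})" for i
  have "(\<Pi>\<^sub>E i\<in>I. S i) = Pi\<^sub>E UNIV S'"
    unfolding S'_def by (auto simp: PiE_iff extensional_def split: if_splits)
  moreover have "compactin (product_topology (\<lambda>i. euclidean) UNIV) (Pi\<^sub>E UNIV S')"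
    by (subst compactin_PiE) (auto simp: S'_def assms)
  ultimately show ?thesis unfolding euclidean_product_topology by simp
qed

lemma phi_le_shift:
  assumes "\<epsilon> > 0" "n \<ge> 1" "\<forall>j<n. \<mu> j \<le> \<nu> j + d"
  shows "phi n \<epsilon> \<kappa> i \<mu> \<le> phi n \<epsilon> \<kappa> i \<nu> + d"
proof -
  define A where "A = (\<Sum>j<n. exp (- (\<kappa> i j + \<nu> j) / \<epsilon>))"
  define B where "B = (\<Sum>j<n. exp (- (\<kappa> i j + \<mu> j) / \<epsilon>))"
  have A: "A > 0" unfolding A_def using assms(2) by (intro sum_pos) (auto simp: lessThan_empty_iff)
  have "exp (- (\<kappa> i j + \<nu> j) / \<epsilon>) * exp (- d / \<epsilon>) \<le> exp (- (\<kappa> i j + \<mu> j) / \<epsilon>)" if "j < n" for j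
    using assms(1) assms(3)[rule_format, OF that] unfolding mult_exp_exp by (simp add: divide_simps)
  then have "A * exp (- d / \<epsilon>) \<le> B" unfolding A_def B_def sum_distrib_right by (intro sum_mono) auto
  moreover have "0 < A * exp (- d / \<epsilon>)" using A by simp
  ultimately have "ln (A * exp (- d / \<epsilon>)) \<le> ln B" by (subst ln_le_cancel_iff) auto
  then have "ln A - d / \<epsilon> \<le> ln B" using A by (simp add: ln_mult)
  then have "\<epsilon> * ln A - d \<le> \<epsilon> * ln B" using assms(1) by (simp add: field_simps)
  then show ?thesis unfolding phi_def A_def B_def by simp
qed

lemma has_real_derivative_at_max_on_Ico:
  fixes f :: "real \<Rightarrow> real"
  assumes deriv: "(f has_real_derivative D) (at x)" and x: "x \<in> {a..<b}"
    and max: "\<forall>t\<in>{a..<b}. f t \<le> f x"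
  shows "D \<le> 0" and "a < x \<Longrightarrow> D = 0"
proof -
  show "D \<le> 0"
  proof (rule ccontr)
    assume "\<not> D \<le> 0"
    then obtain d where d: "d > 0" "\<And>h. 0 < h \<Longrightarrow> h < d \<Longrightarrow> f x < f (x + h)"
      using DERIV_pos_inc_right[OF deriv] by force
    define h where "h = min (d / 2) ((b - x) / 2)"
    have "0 < h" "h < d" "x + h \<in> {a..<b}" using d(1) x unfolding h_def by (auto simp: min_def field_simps)
    then show False using d(2) max by fastforce
  qed
  show "D = 0" if "a < x"
  proof (rule DERIV_local_max[OF deriv])
    show "0 < min (x - a) (b - x)" using that x by simp
    show "\<forall>y. \<bar>x - y\<bar> < min (x - a) (b - x) \<longrightarrow> f y \<le> f x"
      using max by (auto simp: abs_less_iff)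
  qed
qed

lemma has_real_derivative_neg_ln_add_exp:
  assumes "S \<ge> 0" "\<epsilon> > 0"
  shows "((\<lambda>t. - \<epsilon> * ln (S + exp (- (k + t) / \<epsilon>))) has_real_derivative
           exp (- (k + t) / \<epsilon>) / (S + exp (- (k + t) / \<epsilon>))) (at t)"
proof -
  \<comment> \<open>the two sides of the derivative equation normalise \<open>- (k + t)\<close> differently\<close>
  have e: "exp ((- t - k) / \<epsilon>) = exp ((- k - t) / \<epsilon>)" by (simp add: algebra_simps)
  have "0 < S + exp ((- k - t) / \<epsilon>)" using assms(1) by (simp add: add_nonneg_pos)
  then have "S * \<epsilon> + \<epsilon> * exp ((- k - t) / \<epsilon>) \<noteq> 0" "S + exp ((- k - t) / \<epsilon>) \<noteq> 0"
    using assms(2) by (simp_all add: mult.commute[of S] distrib_left[symmetric])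
  with assms show ?thesis by (auto intro!: derivative_eq_intros simp: add_nonneg_pos field_simps e)
qed

lemma has_real_derivative_ln_one_minus:
  assumes "t < T" "T > 0"
  shows "((\<lambda>t. c * ln (1 - t / T)) has_real_derivative - c / (T - t)) (at t)"
  using assms by (auto intro!: derivative_eq_intros simp: field_simps)

section \<open>The pricing game\<close>

locale charging_market =
  fixes n m :: nat and c rbar :: "nat \<Rightarrow> real" and T \<epsilon> :: real
    and \<kappa> :: "nat \<Rightarrow> nat \<Rightarrow> real" and U :: "nat \<Rightarrow> real \<Rightarrow> real"
  assumes n_pos: "n \<ge> 1"
    and c_pos: "\<And>j. j < n \<Longrightarrow> c j > 0" and T_pos: "T > 0" and \<epsilon>_pos: "\<epsilon> > 0"
    and rbar_nonneg: "\<And>i. i < m \<Longrightarrow> 0 \<le> rbar i"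
    and U_cont: "\<And>i. i < m \<Longrightarrow> continuous_on {0..rbar i} (U i)"
    and U_strict_concave: "\<And>i. i < m \<Longrightarrow> strict_concave_on {0..rbar i} (U i)"
begin

abbreviation R :: "(nat \<Rightarrow> real) set" where "R \<equiv> \<Pi>\<^sub>E i\<in>{..<m}. {0..rbar i}"
abbreviation M :: "(nat \<Rightarrow> real) set" where "M \<equiv> \<Pi>\<^sub>E j\<in>{..<n}. {0..<T}"
abbreviation lagrangian :: "(nat \<Rightarrow> real) \<Rightarrow> (nat \<Rightarrow> real) \<Rightarrow> real" where
  "lagrangian \<equiv> W n m c T \<epsilon> \<kappa> U"
abbreviation \<phi> :: "nat \<Rightarrow> (nat \<Rightarrow> real) \<Rightarrow> real" where "\<phi> \<equiv> phi n \<epsilon> \<kappa>"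

definition barrier :: "(nat \<Rightarrow> real) \<Rightarrow> real" where
  "barrier \<mu> = (\<Sum>j<n. c j * ln (1 - \<mu> j / T))"

definition best_demand :: "(nat \<Rightarrow> real) \<Rightarrow> nat \<Rightarrow> real" where
  "best_demand \<mu> = (\<lambda>i\<in>{..<m}. conj_argmin (rbar i) (U i) (\<phi> i \<mu>))"

text \<open>Restricting to {..<n} keeps convex combinations of points of M extensional.\<close>
definition convex_comb :: "real \<Rightarrow> (nat \<Rightarrow> real) \<Rightarrow> (nat \<Rightarrow> real) \<Rightarrow> nat \<Rightarrow> real" where
  "convex_comb t \<mu> \<nu> = (\<lambda>j\<in>{..<n}. (1 - t) * \<mu> j + t * \<nu> j)"

lemma lagrangian_eq: "lagrangian r \<mu> = (\<Sum>i<m. r i * \<phi> i \<mu> - U i (r i)) + barrier \<mu>"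
  unfolding W_def barrier_def ..

lemma lagrangian_diff:
  "lagrangian r \<mu> - lagrangian r \<nu> = (\<Sum>i<m. r i * (\<phi> i \<mu> - \<phi> i \<nu>)) + (barrier \<mu> - barrier \<nu>)"
  unfolding lagrangian_eq by (simp add: sum_subtractf[symmetric] algebra_simps)

lemma R_memD: "r \<in> R \<Longrightarrow> i < m \<Longrightarrow> 0 \<le> r i \<and> r i \<le> rbar i"
  by (auto simp: PiE_iff)

lemma M_memD: "\<mu> \<in> M \<Longrightarrow> j < n \<Longrightarrow> 0 \<le> \<mu> j \<and> \<mu> j < T"
  by (auto simp: PiE_iff)

lemma best_demand_in_R: "best_demand \<mu> \<in> R"
  unfolding best_demand_def using conj_argmin(1)[OF rbar_nonneg U_cont U_strict_concave] by auto

lemma best_demand_term_le: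
  assumes "i < m" "y \<in> {0..rbar i}"
  shows "best_demand \<mu> i * \<phi> i \<mu> - U i (best_demand \<mu> i) \<le> y * \<phi> i \<mu> - U i y"
proof -
  have "\<phi> i \<mu> * conj_argmin (rbar i) (U i) (\<phi> i \<mu>) - U i (conj_argmin (rbar i) (U i) (\<phi> i \<mu>))
      \<le> \<phi> i \<mu> * y - U i y"
    by (rule conj_argmin(2)[OF rbar_nonneg U_cont U_strict_concave, OF assms(1,1,1) assms(2)])
  then show ?thesis using assms(1) unfolding best_demand_def by (simp add: mult.commute)
qed

lemma best_demand_le: "r \<in> R \<Longrightarrow> lagrangian (best_demand \<mu>) \<mu> \<le> lagrangian r \<mu>"
  unfolding lagrangian_eq by (intro add_right_mono sum_mono best_demand_term_le) (auto simp: PiE_iff)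

lemma best_demand_unique:
  assumes r: "r \<in> R" and le: "lagrangian r \<mu> \<le> lagrangian (best_demand \<mu>) \<mu>"
  shows "r = best_demand \<mu>"
proof (rule PiE_ext[OF r best_demand_in_R])
  define g where "g i y = y * \<phi> i \<mu> - U i y" for i y
  have "(\<Sum>i<m. g i (r i) - g i (best_demand \<mu> i)) \<le> 0"
    using le unfolding lagrangian_eq g_def by (simp add: sum_subtractf)
  moreover have ge: "\<forall>i\<in>{..<m}. 0 \<le> g i (r i) - g i (best_demand \<mu> i)"
    using best_demand_term_le r unfolding g_def by (auto simp: PiE_iff)
  moreover have "0 \<le> (\<Sum>i<m. g i (r i) - g i (best_demand \<mu> i))" using ge by (intro sum_nonneg) auto
  ultimately have "(\<Sum>i<m. g i (r i) - g i (best_demand \<mu> i)) = 0" by linarith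
  then have eq: "\<forall>i\<in>{..<m}. g i (r i) = g i (best_demand \<mu> i)"
    using ge by (subst (asm) sum_nonneg_eq_0_iff) auto
  fix i assume i: "i \<in> {..<m}"
  have "\<forall>z\<in>{0..rbar i}. \<phi> i \<mu> * r i - U i (r i) \<le> \<phi> i \<mu> * z - U i z"
    using eq i best_demand_term_le[of i] unfolding g_def by (auto simp: mult.commute)
  then have "conj_argmin (rbar i) (U i) (\<phi> i \<mu>) = r i"
    using i r by (intro conj_argmin_eqI rbar_nonneg U_cont U_strict_concave) (auto simp: PiE_iff)
  then show "r i = best_demand \<mu> i" using i unfolding best_demand_def by simp
qed

lemma convex_comb_in_M:
  assumes "\<mu> \<in> M" "\<nu> \<in> M" "0 \<le> t" "t \<le> 1"
  shows "convex_comb t \<mu> \<nu> \<in> M"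
  unfolding convex_comb_def restrict_PiE_iff
proof
  fix j assume "j \<in> {..<n}"
  then have "0 \<le> \<mu> j" "\<mu> j < T" "0 \<le> \<nu> j" "\<nu> j < T" using assms(1,2) M_memD by auto
  then show "(1 - t) * \<mu> j + t * \<nu> j \<in> {0..<T}"
    using assms(3,4) convex_bound_lt[of "\<mu> j" T "\<nu> j" "1 - t" t] by simp
qed

lemma convex_comb_0: "\<mu> \<in> M \<Longrightarrow> convex_comb 0 \<mu> \<nu> = \<mu>"
  unfolding convex_comb_def by (auto simp: PiE_iff extensional_def)

lemma phi_convex_comb:
  "\<phi> i (convex_comb t \<mu> \<nu>) =
     - \<epsilon> * ln (\<Sum>j<n. exp ((1 - t) * (- (\<kappa> i j + \<mu> j) / \<epsilon>) + t * (- (\<kappa> i j + \<nu> j) / \<epsilon>)))"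
  unfolding phi_def convex_comb_def using \<epsilon>_pos
  by (intro arg_cong2[where f = "(*)"] refl arg_cong[where f = ln] sum.cong) (simp_all add: field_simps)

lemma phi_concave:
  assumes "0 \<le> t" "t \<le> 1"
  shows "(1 - t) * \<phi> i \<mu> + t * \<phi> i \<nu> \<le> \<phi> i (convex_comb t \<mu> \<nu>)"
proof -
  have "ln (\<Sum>j<n. exp ((1 - t) * (- (\<kappa> i j + \<mu> j) / \<epsilon>) + t * (- (\<kappa> i j + \<nu> j) / \<epsilon>)))
      \<le> (1 - t) * ln (\<Sum>j<n. exp (- (\<kappa> i j + \<mu> j) / \<epsilon>)) + t * ln (\<Sum>j<n. exp (- (\<kappa> i j + \<nu> j) / \<epsilon>))"
    using n_pos assms by (intro ln_sum_exp_convex) (auto simp: lessThan_empty_iff)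
  then have "\<epsilon> * ln (\<Sum>j<n. exp ((1 - t) * (- (\<kappa> i j + \<mu> j) / \<epsilon>) + t * (- (\<kappa> i j + \<nu> j) / \<epsilon>)))
      \<le> \<epsilon> * ((1 - t) * ln (\<Sum>j<n. exp (- (\<kappa> i j + \<mu> j) / \<epsilon>))
               + t * ln (\<Sum>j<n. exp (- (\<kappa> i j + \<nu> j) / \<epsilon>)))"
    using \<epsilon>_pos by (intro mult_left_mono) auto
  then show ?thesis unfolding phi_convex_comb unfolding phi_def by (simp add: algebra_simps)
qed

lemma barrier_term_concave:
  assumes "j < n" "\<mu> \<in> M" "\<nu> \<in> M" "0 \<le> t" "t \<le> 1"
  shows "(1 - t) * (c j * ln (1 - \<mu> j / T)) + t * (c j * ln (1 - \<nu> j / T))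
         \<le> c j * ln (1 - convex_comb t \<mu> \<nu> j / T)"
proof -
  have "1 - \<mu> j / T > 0" "1 - \<nu> j / T > 0" using M_memD[OF assms(2,1)] M_memD[OF assms(3,1)] T_pos by auto
  moreover have "1 - convex_comb t \<mu> \<nu> j / T = (1 - t) *\<^sub>R (1 - \<mu> j / T) + t *\<^sub>R (1 - \<nu> j / T)"
    using assms(1) T_pos unfolding convex_comb_def by (simp add: field_simps)
  ultimately have "(1 - t) * ln (1 - \<mu> j / T) + t * ln (1 - \<nu> j / T) \<le> ln (1 - convex_comb t \<mu> \<nu> j / T)"
    using concave_onD[OF ln_concave, of t "1 - \<mu> j / T" "1 - \<nu> j / T"] assms(4,5) by simp
  then have "c j * ((1 - t) * ln (1 - \<mu> j / T) + t * ln (1 - \<nu> j / T)) \<le> c j * ln (1 - convex_comb t \<mu> \<nu> j / T)"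
    using c_pos[OF assms(1)] by (intro mult_left_mono) auto
  then show ?thesis by (simp add: algebra_simps)
qed

lemma barrier_convex_comb_eq:
  "(1 - t) * barrier \<mu> + t * barrier \<nu> = (\<Sum>j<n. (1 - t) * (c j * ln (1 - \<mu> j / T)) + t * (c j * ln (1 - \<nu> j / T)))"
  unfolding barrier_def by (simp add: sum.distrib sum_distrib_left)

lemma barrier_concave:
  assumes "\<mu> \<in> M" "\<nu> \<in> M" "0 \<le> t" "t \<le> 1"
  shows "(1 - t) * barrier \<mu> + t * barrier \<nu> \<le> barrier (convex_comb t \<mu> \<nu>)"
  unfolding barrier_convex_comb_eq unfolding barrier_def
  using assms by (intro sum_mono barrier_term_concave) auto

lemma barrier_midpoint_strict:
  assumes "\<mu> \<in> M" "\<nu> \<in> M" "\<mu> \<noteq> \<nu>"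
  shows "(barrier \<mu> + barrier \<nu>) / 2 < barrier (convex_comb (1/2) \<mu> \<nu>)"
proof -
  obtain j where j: "j < n" "\<mu> j \<noteq> \<nu> j" using PiE_ext[OF assms(1,2)] assms(3) by blast
  have "(barrier \<mu> + barrier \<nu>) / 2 = (1 - 1/2) * barrier \<mu> + 1/2 * barrier \<nu>" by simp
  also have "\<dots> < barrier (convex_comb (1/2) \<mu> \<nu>)"
    unfolding barrier_convex_comb_eq unfolding barrier_def
  proof (rule sum_strict_mono_ex1)
    show "\<forall>k\<in>{..<n}. (1 - 1/2) * (c k * ln (1 - \<mu> k / T)) + 1/2 * (c k * ln (1 - \<nu> k / T))
        \<le> c k * ln (1 - convex_comb (1/2) \<mu> \<nu> k / T)"
      using assms(1,2) by (intro ballI barrier_term_concave) auto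
    have "1 - \<mu> j / T > 0" "1 - \<nu> j / T > 0" "1 - \<mu> j / T \<noteq> 1 - \<nu> j / T"
      using M_memD[OF assms(1) j(1)] M_memD[OF assms(2) j(1)] j(2) T_pos by auto
    moreover have "((1 - \<mu> j / T) + (1 - \<nu> j / T)) / 2 = 1 - convex_comb (1/2) \<mu> \<nu> j / T"
      using j(1) T_pos unfolding convex_comb_def by (simp add: field_simps)
    ultimately have "(ln (1 - \<mu> j / T) + ln (1 - \<nu> j / T)) / 2 < ln (1 - convex_comb (1/2) \<mu> \<nu> j / T)"
      using ln_midpoint_strict by metis
    then have "c j * ((ln (1 - \<mu> j / T) + ln (1 - \<nu> j / T)) / 2) < c j * ln (1 - convex_comb (1/2) \<mu> \<nu> j / T)"
      using c_pos[OF j(1)] by (rule mult_strict_left_mono)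
    then show "\<exists>k\<in>{..<n}. (1 - 1/2) * (c k * ln (1 - \<mu> k / T)) + 1/2 * (c k * ln (1 - \<nu> k / T))
        < c k * ln (1 - convex_comb (1/2) \<mu> \<nu> k / T)"
      using j(1) by (intro bexI[of _ j]) (simp_all add: algebra_simps)
  qed simp
  finally show ?thesis .
qed

lemma demand_part_concave:
  assumes "r \<in> R" "0 \<le> t" "t \<le> 1"
  shows "(1 - t) * (\<Sum>i<m. r i * \<phi> i \<mu> - U i (r i)) + t * (\<Sum>i<m. r i * \<phi> i \<nu> - U i (r i))
         \<le> (\<Sum>i<m. r i * \<phi> i (convex_comb t \<mu> \<nu>) - U i (r i))"
proof -
  have "(1 - t) * (\<Sum>i<m. r i * \<phi> i \<mu> - U i (r i)) + t * (\<Sum>i<m. r i * \<phi> i \<nu> - U i (r i))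
      = (\<Sum>i<m. (1 - t) * (r i * \<phi> i \<mu> - U i (r i)) + t * (r i * \<phi> i \<nu> - U i (r i)))"
    by (simp add: sum_distrib_left sum.distrib)
  also have "\<dots> \<le> (\<Sum>i<m. r i * \<phi> i (convex_comb t \<mu> \<nu>) - U i (r i))"
  proof (rule sum_mono)
    fix i assume "i \<in> {..<m}"
    then have "0 \<le> r i" using R_memD[OF assms(1)] by simp
    with phi_concave[OF assms(2,3)]
    have "r i * ((1 - t) * \<phi> i \<mu> + t * \<phi> i \<nu>) \<le> r i * \<phi> i (convex_comb t \<mu> \<nu>)"
      by (rule mult_left_mono)
    then show "(1 - t) * (r i * \<phi> i \<mu> - U i (r i)) + t * (r i * \<phi> i \<nu> - U i (r i))
        \<le> r i * \<phi> i (convex_comb t \<mu> \<nu>) - U i (r i)"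
      by (simp add: algebra_simps)
  qed
  finally show ?thesis .
qed

lemma lagrangian_concave:
  assumes "r \<in> R" "\<mu> \<in> M" "\<nu> \<in> M" "0 \<le> t" "t \<le> 1"
  shows "(1 - t) * lagrangian r \<mu> + t * lagrangian r \<nu> \<le> lagrangian r (convex_comb t \<mu> \<nu>)"
proof -
  define D where "D \<mu> = (\<Sum>i<m. r i * \<phi> i \<mu> - U i (r i))" for \<mu>
  have "(1 - t) * D \<mu> + t * D \<nu> \<le> D (convex_comb t \<mu> \<nu>)"
    unfolding D_def using assms(1,4,5) by (rule demand_part_concave)
  then show ?thesis using barrier_concave[OF assms(2-5)]
    unfolding lagrangian_eq D_def[symmetric] by (simp add: algebra_simps)
qed

lemma lagrangian_midpoint_strict:
  assumes "r \<in> R" "\<mu> \<in> M" "\<nu> \<in> M" "\<mu> \<noteq> \<nu>"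
  shows "(lagrangian r \<mu> + lagrangian r \<nu>) / 2 < lagrangian r (convex_comb (1/2) \<mu> \<nu>)"
proof -
  define D where "D \<mu> = (\<Sum>i<m. r i * \<phi> i \<mu> - U i (r i))" for \<mu>
  have "(1 - 1/2) * D \<mu> + 1/2 * D \<nu> \<le> D (convex_comb (1/2) \<mu> \<nu>)"
    unfolding D_def using assms(1) by (rule demand_part_concave) simp_all
  then show ?thesis using barrier_midpoint_strict[OF assms(2-4)]
    unfolding lagrangian_eq D_def[symmetric] by simp
qed

definition dual :: "(nat \<Rightarrow> real) \<Rightarrow> real" where
  "dual \<mu> = lagrangian (best_demand \<mu>) \<mu>"

lemma dual_le: "r \<in> R \<Longrightarrow> dual \<mu> \<le> lagrangian r \<mu>"
  unfolding dual_def by (rule best_demand_le)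

lemma continuous_on_phi: "continuous_on A (\<phi> i)"
proof -
  have "(\<Sum>j<n. exp (- (\<kappa> i j + \<mu> j) / \<epsilon>)) \<noteq> 0" for \<mu>
    using n_pos by (intro sum_pos[THEN less_imp_neq, symmetric]) (auto simp: lessThan_empty_iff)
  then show ?thesis unfolding phi_def using \<epsilon>_pos
    by (intro continuous_intros continuous_on_subset[OF continuous_on_product_coordinates]) auto
qed

lemma continuous_on_best_demand: "i < m \<Longrightarrow> continuous_on A (\<lambda>\<mu>. best_demand \<mu> i)"
  unfolding best_demand_def
  by (simp add: continuous_on_compose2[OF continuous_conj_argmin continuous_on_phi]
      rbar_nonneg U_cont U_strict_concave)

lemma continuous_on_dual:
  assumes "A \<subseteq> M"
  shows "continuous_on A dual"
proof -
  have "continuous_on A (\<lambda>\<mu>. U i (best_demand \<mu> i))" if "i < m" for i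
    using best_demand_in_R that
    by (intro continuous_on_compose2[OF U_cont continuous_on_best_demand]) (auto simp: PiE_iff)
  moreover have "1 - \<mu> j / T \<noteq> 0" if "\<mu> \<in> A" "j < n" for \<mu> j
    using M_memD[of \<mu> j] assms that T_pos by auto
  ultimately show ?thesis
    unfolding dual_def lagrangian_eq barrier_def
    using T_pos by (intro continuous_intros continuous_on_best_demand continuous_on_phi
        continuous_on_subset[OF continuous_on_product_coordinates]) auto
qed

lemma barrier_le_term:
  assumes "\<nu> \<in> M" "j < n"
  shows "barrier \<nu> \<le> c j * ln (1 - \<nu> j / T)"
proof -
  have "c k * ln (1 - \<nu> k / T) \<le> 0" if "k < n" for k
    using M_memD[OF assms(1) that] c_pos[OF that] T_pos by (auto intro!: mult_nonneg_nonpos)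
  then have "(\<Sum>k\<in>{..<n}-{j}. c k * ln (1 - \<nu> k / T)) \<le> 0" by (intro sum_nonpos) auto
  then show ?thesis unfolding barrier_def using assms(2) by (simp add: sum.remove)
qed

lemma dual_le_barrier: "dual \<nu> \<le> barrier \<nu> - (\<Sum>i<m. U i 0)"
proof -
  have "(\<lambda>i\<in>{..<m}. 0) \<in> R" using rbar_nonneg by auto
  from dual_le[OF this] show ?thesis unfolding lagrangian_eq by (simp add: sum_negf)
qed

text \<open>The barrier tends to -\<infinity> as some \<mu> j approaches T, which confines the maximisation to a
  compact box.\<close>
lemma dual_attains_max: "\<exists>\<mu>\<in>M. \<forall>\<nu>\<in>M. dual \<nu> \<le> dual \<mu>"
proof -
  define \<mu>0 where "\<mu>0 = (\<lambda>j\<in>{..<n}. 0::real)"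
  define L where "L = dual \<mu>0 + (\<Sum>i<m. U i 0)"
  have "barrier \<mu>0 = 0" unfolding barrier_def \<mu>0_def by simp
  then have "L \<le> 0" using dual_le_barrier[of \<mu>0] unfolding L_def by simp
  define s where "s j = T * (1 - exp ((L - 1) / c j))" for j
  have s: "0 \<le> s j" "s j < T" if "j < n" for j
  proof -
    have "exp ((L - 1) / c j) < 1" using \<open>L \<le> 0\<close> c_pos[OF that] by (simp add: divide_neg_pos)
    then show "0 \<le> s j" "s j < T" unfolding s_def using T_pos by simp_all
  qed
  define K where "K = (\<Pi>\<^sub>E j\<in>{..<n}. {0..s j})"
  have "K \<subseteq> M" unfolding K_def by (intro PiE_mono) (auto intro: le_less_trans[OF _ s(2)])
  have "\<mu>0 \<in> K" unfolding K_def \<mu>0_def using s by simp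
  have "compact K" unfolding K_def by (rule compact_PiE) simp
  then obtain \<mu>s where \<mu>s: "\<mu>s \<in> K" "\<forall>\<nu>\<in>K. dual \<nu> \<le> dual \<mu>s"
    using continuous_attains_sup[OF _ _ continuous_on_dual[OF \<open>K \<subseteq> M\<close>]] \<open>\<mu>0 \<in> K\<close> by blast
  have "dual \<nu> \<le> dual \<mu>s" if \<nu>: "\<nu> \<in> M" for \<nu>
  proof (cases "\<nu> \<in> K")
    case True
    then show ?thesis using \<mu>s by blast
  next
    case False
    have "\<nu> \<in> K" if "\<forall>j<n. \<nu> j \<le> s j"
      using \<nu> that unfolding K_def by (simp add: PiE_iff)
    with False obtain j where j: "j < n" "s j < \<nu> j" by force
    have "0 < 1 - \<nu> j / T" using M_memD[OF \<nu> j(1)] T_pos by simp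
    moreover have "1 - \<nu> j / T < exp ((L - 1) / c j)" using j T_pos unfolding s_def by (simp add: field_simps)
    ultimately have "ln (1 - \<nu> j / T) < (L - 1) / c j" by (metis ln_exp ln_less_cancel_iff exp_gt_zero)
    then have "c j * ln (1 - \<nu> j / T) < L - 1" using c_pos[OF j(1)] by (simp add: field_simps)
    then have "dual \<nu> < dual \<mu>0"
      using dual_le_barrier[of \<nu>] barrier_le_term[OF \<nu> j(1)] unfolding L_def by linarith
    also have "\<dots> \<le> dual \<mu>s" using \<mu>s \<open>\<mu>0 \<in> K\<close> by blast
    finally show ?thesis by simp
  qed
  then show ?thesis using \<mu>s \<open>K \<subseteq> M\<close> by blast
qed

lemma phi_convex_comb_dist:
  assumes "\<mu> \<in> M" "\<nu> \<in> M" "0 \<le> t" "t \<le> 1"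
  shows "\<bar>\<phi> i (convex_comb t \<mu> \<nu>) - \<phi> i \<mu>\<bar> \<le> t * T"
proof -
  have dist: "\<bar>convex_comb t \<mu> \<nu> j - \<mu> j\<bar> \<le> t * T" if "j < n" for j
  proof -
    have "\<bar>\<nu> j - \<mu> j\<bar> \<le> T" using M_memD[OF assms(1) that] M_memD[OF assms(2) that] by auto
    then have "\<bar>t * (\<nu> j - \<mu> j)\<bar> \<le> t * T" using assms(3) by (simp add: abs_mult mult_left_mono)
    then show ?thesis using that unfolding convex_comb_def by (simp add: algebra_simps)
  qed
  have "convex_comb t \<mu> \<nu> j \<le> \<mu> j + t * T \<and> \<mu> j \<le> convex_comb t \<mu> \<nu> j + t * T" if "j < n" for j
    using dist[OF that] unfolding abs_le_iff by linarith
  then have "\<forall>j<n. convex_comb t \<mu> \<nu> j \<le> \<mu> j + t * T" "\<forall>j<n. \<mu> j \<le> convex_comb t \<mu> \<nu> j + t * T"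
    by blast+
  from this[THEN phi_le_shift[OF \<epsilon>_pos n_pos]]
  have "\<phi> i (convex_comb t \<mu> \<nu>) \<le> \<phi> i \<mu> + t * T" "\<phi> i \<mu> \<le> \<phi> i (convex_comb t \<mu> \<nu>) + t * T" .
  then show ?thesis by (simp add: abs_le_iff)
qed

lemma tendsto_best_demand_convex_comb:
  assumes "\<mu> \<in> M" "i < m"
  shows "((\<lambda>t. best_demand (convex_comb t \<mu> \<nu>) i) \<longlongrightarrow> best_demand \<mu> i) (at_right 0)"
proof -
  have "continuous_on UNIV (\<lambda>t. \<phi> i (convex_comb t \<mu> \<nu>))"
  proof -
    have "(\<Sum>j<n. exp ((1 - t) * (- (\<kappa> i j + \<mu> j) / \<epsilon>) + t * (- (\<kappa> i j + \<nu> j) / \<epsilon>))) \<noteq> 0" for t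
      using n_pos by (intro sum_pos[THEN less_imp_neq, symmetric]) (auto simp: lessThan_empty_iff)
    then show ?thesis unfolding phi_convex_comb by (intro continuous_intros) auto
  qed
  then have "continuous_on UNIV (\<lambda>t. best_demand (convex_comb t \<mu> \<nu>) i)"
    unfolding best_demand_def using assms(2)
    by (simp add: continuous_on_compose2[OF continuous_conj_argmin] rbar_nonneg U_cont U_strict_concave)
  then have "((\<lambda>t. best_demand (convex_comb t \<mu> \<nu>) i) \<longlongrightarrow> best_demand \<mu> i) (at 0)"
    using convex_comb_0[OF assms(1)] by (metis UNIV_I continuous_on_def)
  then show ?thesis by (simp add: filterlim_at_split)
qed

lemma dual_max_lagrangian_gain_le:
  assumes \<mu>s: "\<mu>s \<in> M" and max: "\<forall>\<nu>\<in>M. dual \<nu> \<le> dual \<mu>s" and \<nu>: "\<nu> \<in> M" and t: "0 < t" "t \<le> 1"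
  defines "rs \<equiv> best_demand \<mu>s"
  shows "lagrangian rs \<nu> - lagrangian rs \<mu>s \<le> T * (\<Sum>i<m. \<bar>rs i - best_demand (convex_comb t \<mu>s \<nu>) i\<bar>)"
proof -
  define \<mu>t where "\<mu>t = convex_comb t \<mu>s \<nu>"
  define rt where "rt = best_demand \<mu>t"
  have "\<mu>t \<in> M" unfolding \<mu>t_def using \<mu>s \<nu> t by (intro convex_comb_in_M) auto
  have "(1 - t) * lagrangian rs \<mu>s + t * lagrangian rs \<nu> \<le> lagrangian rs \<mu>t"
    unfolding \<mu>t_def rs_def using \<mu>s \<nu> t by (intro lagrangian_concave best_demand_in_R) auto
  then have rise: "t * (lagrangian rs \<nu> - lagrangian rs \<mu>s) \<le> lagrangian rs \<mu>t - lagrangian rs \<mu>s"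
    by (simp add: algebra_simps)
  have "lagrangian rt \<mu>t = dual \<mu>t" unfolding rt_def dual_def ..
  also have "\<dots> \<le> dual \<mu>s" using max \<open>\<mu>t \<in> M\<close> by blast
  also have "\<dots> \<le> lagrangian rt \<mu>s" by (rule dual_le[OF best_demand_in_R[of \<mu>t, folded rt_def]])
  finally have fall: "lagrangian rt \<mu>t - lagrangian rt \<mu>s \<le> 0" by simp
  have "(lagrangian rs \<mu>t - lagrangian rs \<mu>s) - (lagrangian rt \<mu>t - lagrangian rt \<mu>s)
      = (\<Sum>i<m. (rs i - rt i) * (\<phi> i \<mu>t - \<phi> i \<mu>s))"
    unfolding lagrangian_diff by (simp add: sum_subtractf[symmetric] left_diff_distrib)
  also have "\<dots> \<le> (\<Sum>i<m. \<bar>rs i - rt i\<bar> * (t * T))"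
  proof (rule sum_mono)
    fix i
    have "(rs i - rt i) * (\<phi> i \<mu>t - \<phi> i \<mu>s) \<le> \<bar>rs i - rt i\<bar> * \<bar>\<phi> i \<mu>t - \<phi> i \<mu>s\<bar>"
      by (metis abs_ge_self abs_mult)
    also have "\<dots> \<le> \<bar>rs i - rt i\<bar> * (t * T)"
      unfolding \<mu>t_def using \<mu>s \<nu> t by (intro mult_left_mono phi_convex_comb_dist) auto
    finally show "(rs i - rt i) * (\<phi> i \<mu>t - \<phi> i \<mu>s) \<le> \<bar>rs i - rt i\<bar> * (t * T)" .
  qed
  also have "\<dots> = t * (T * (\<Sum>i<m. \<bar>rs i - rt i\<bar>))" by (simp add: sum_distrib_left algebra_simps)
  finally have "t * (lagrangian rs \<nu> - lagrangian rs \<mu>s) \<le> t * (T * (\<Sum>i<m. \<bar>rs i - rt i\<bar>))"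
    using rise fall by linarith
  then show ?thesis using t(1) unfolding rt_def \<mu>t_def by (simp add: mult_le_cancel_left_pos)
qed

text \<open>Danskin's argument: moving from the dual maximiser towards a better \<nu> would raise the
  Lagrangian of rs at a linear rate, while the best responses converge to rs, so the gain is
  bounded by a quantity that vanishes as t \<rightarrow> 0.\<close>
lemma saddle_point_exists:
  obtains \<mu>s where "\<mu>s \<in> M" "\<forall>\<nu>\<in>M. lagrangian (best_demand \<mu>s) \<nu> \<le> lagrangian (best_demand \<mu>s) \<mu>s"
proof -
  obtain \<mu>s where \<mu>s: "\<mu>s \<in> M" and max: "\<forall>\<nu>\<in>M. dual \<nu> \<le> dual \<mu>s"
    using dual_attains_max by blast
  define rs where "rs = best_demand \<mu>s"
  have "lagrangian rs \<nu> - lagrangian rs \<mu>s \<le> 0" if \<nu>: "\<nu> \<in> M" for \<nu>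
  proof -
    define gap where "gap t = T * (\<Sum>i<m. \<bar>rs i - best_demand (convex_comb t \<mu>s \<nu>) i\<bar>)" for t
    have "eventually (\<lambda>t. lagrangian rs \<nu> - lagrangian rs \<mu>s \<le> gap t) (at_right 0)"
      unfolding eventually_at_right_field gap_def rs_def using dual_max_lagrangian_gain_le[OF \<mu>s max \<nu>]
      by (intro exI[of _ 1]) auto
    moreover have "(gap \<longlongrightarrow> T * (\<Sum>i<m. \<bar>rs i - rs i\<bar>)) (at_right 0)"
      unfolding gap_def rs_def using \<mu>s by (intro tendsto_intros tendsto_best_demand_convex_comb) auto
    ultimately show ?thesis
      using tendsto_le[OF trivial_limit_at_right_real _ tendsto_const] by fastforce
  qed
  with \<mu>s show thesis unfolding rs_def by (intro that) auto
qed

subsection \<open>Duality with the entropic transport problem\<close>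

definition gibbs_plan :: "(nat \<Rightarrow> real) \<Rightarrow> (nat \<Rightarrow> real) \<Rightarrow> nat \<Rightarrow> nat \<Rightarrow> real" where
  "gibbs_plan r \<mu> i j = r i * exp (- (\<kappa> i j + \<mu> j) / \<epsilon>) / (\<Sum>k<n. exp (- (\<kappa> i k + \<mu> k) / \<epsilon>))"

lemma exp_sum_pos: "0 < (\<Sum>k<n. exp (- (\<kappa> i k + \<mu> k) / \<epsilon>))"
  using n_pos by (intro sum_pos) (auto simp: lessThan_empty_iff)

lemma gibbs_plan_feasible:
  assumes "r \<in> R"
  shows "feasible n m r (gibbs_plan r \<mu>)"
  unfolding feasible_def
proof (intro conjI allI impI)
  fix i j assume "i < m" "j < n"
  then show "0 \<le> gibbs_plan r \<mu> i j"
    unfolding gibbs_plan_def using R_memD[OF assms] exp_sum_pos[of i \<mu>] by simp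
next
  fix i assume "i < m"
  have "(\<Sum>j<n. gibbs_plan r \<mu> i j)
      = r i * (\<Sum>j<n. exp (- (\<kappa> i j + \<mu> j) / \<epsilon>)) / (\<Sum>k<n. exp (- (\<kappa> i k + \<mu> k) / \<epsilon>))"
    unfolding gibbs_plan_def by (simp add: sum_distrib_left sum_divide_distrib)
  then show "(\<Sum>j<n. gibbs_plan r \<mu> i j) = r i" using exp_sum_pos[of i \<mu>] by simp
qed

lemma cost_eq:
  "cost n m c T \<epsilon> \<kappa> r x = (\<Sum>i<m. \<Sum>j<n. (\<kappa> i j + \<mu> j) * x i j + \<epsilon> * xlogx (x i j) (r i)) + barrier \<mu>
     + (\<Sum>j<n. beta (c j) (T * (\<Sum>i<m. x i j)) - (\<mu> j * (\<Sum>i<m. x i j) + c j * ln (1 - \<mu> j / T)))"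
proof -
  have "(\<Sum>i<m. \<Sum>j<n. (\<kappa> i j + \<mu> j) * x i j + \<epsilon> * xlogx (x i j) (r i))
      = (\<Sum>i<m. \<Sum>j<n. \<kappa> i j * x i j) + (\<Sum>i<m. \<Sum>j<n. \<mu> j * x i j) + \<epsilon> * (\<Sum>i<m. \<Sum>j<n. xlogx (x i j) (r i))"
    by (simp add: sum.distrib distrib_right sum_distrib_left)
  moreover have "(\<Sum>i<m. \<Sum>j<n. \<mu> j * x i j) = (\<Sum>j<n. \<mu> j * (\<Sum>i<m. x i j))"
    by (simp add: sum_distrib_left) (rule sum.swap)
  moreover have "(\<Sum>j<n. beta (c j) (T * (\<Sum>i<m. x i j)) - (\<mu> j * (\<Sum>i<m. x i j) + c j * ln (1 - \<mu> j / T)))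
      = (\<Sum>j<n. beta (c j) (T * (\<Sum>i<m. x i j))) - (\<Sum>j<n. \<mu> j * (\<Sum>i<m. x i j)) - barrier \<mu>"
    unfolding barrier_def by (simp add: sum_subtractf sum.distrib)
  ultimately show ?thesis unfolding cost_def by simp
qed

lemma weak_duality:
  assumes "\<mu> \<in> M" "feasible n m r x"
  shows "(\<Sum>i<m. r i * \<phi> i \<mu>) + barrier \<mu> \<le> cost n m c T \<epsilon> \<kappa> r x"
proof -
  have x: "\<And>i j. i < m \<Longrightarrow> j < n \<Longrightarrow> 0 \<le> x i j" "\<And>i. i < m \<Longrightarrow> (\<Sum>j<n. x i j) = r i"
    using assms(2) unfolding feasible_def by auto
  have "(\<Sum>i<m. r i * \<phi> i \<mu>) \<le> (\<Sum>i<m. \<Sum>j<n. (\<kappa> i j + \<mu> j) * x i j + \<epsilon> * xlogx (x i j) (r i))"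
  proof (rule sum_mono)
    fix i assume "i \<in> {..<m}"
    then have "- \<epsilon> * r i * ln (\<Sum>j<n. exp (- (\<kappa> i j + \<mu> j) / \<epsilon>))
        \<le> (\<Sum>j<n. (\<kappa> i j + \<mu> j) * x i j + \<epsilon> * xlogx (x i j) (r i))"
      using x n_pos \<epsilon>_pos by (intro gibbs_variational_le) (auto simp: lessThan_empty_iff)
    then show "r i * \<phi> i \<mu> \<le> (\<Sum>j<n. (\<kappa> i j + \<mu> j) * x i j + \<epsilon> * xlogx (x i j) (r i))"
      unfolding phi_def by (simp add: mult.left_commute)
  qed
  moreover have "0 \<le> (\<Sum>j<n. beta (c j) (T * (\<Sum>i<m. x i j)) - (\<mu> j * (\<Sum>i<m. x i j) + c j * ln (1 - \<mu> j / T)))"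
    using x assms(1) c_pos T_pos M_memD
    by (intro sum_nonneg) (auto intro!: beta_fenchel_young sum_nonneg simp: diff_ge_0_iff_ge)
  ultimately show ?thesis unfolding cost_eq[of _ _ \<mu>] by linarith
qed

lemma strong_duality:
  assumes "r \<in> R"
    and "\<And>j. j < n \<Longrightarrow> beta (c j) (T * (\<Sum>i<m. gibbs_plan r \<mu> i j))
           = \<mu> j * (\<Sum>i<m. gibbs_plan r \<mu> i j) + c j * ln (1 - \<mu> j / T)"
  shows "cost n m c T \<epsilon> \<kappa> r (gibbs_plan r \<mu>) = (\<Sum>i<m. r i * \<phi> i \<mu>) + barrier \<mu>"
proof -
  have "(\<Sum>j<n. (\<kappa> i j + \<mu> j) * gibbs_plan r \<mu> i j + \<epsilon> * xlogx (gibbs_plan r \<mu> i j) (r i)) = r i * \<phi> i \<mu>"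
    if "i < m" for i
    using gibbs_variational_eq[where J = "{..<n}" and r = "r i" and a = "\<lambda>j. \<kappa> i j + \<mu> j"] n_pos \<epsilon>_pos R_memD[OF assms(1) that]
    unfolding gibbs_plan_def phi_def by (simp add: lessThan_empty_iff)
  then show ?thesis unfolding cost_eq[of _ _ \<mu>] using assms(2) by simp
qed

lemma lagrangian_fun_upd_deriv:
  assumes "\<mu> \<in> M" "j < n"
  shows "((\<lambda>t. lagrangian r (\<mu>(j := t))) has_real_derivative
           (\<Sum>i<m. gibbs_plan r \<mu> i j) - c j / (T - \<mu> j)) (at (\<mu> j))"
proof -
  have split: "(\<Sum>k<n. g k ((\<mu>(j := t)) k)) = (\<Sum>k\<in>{..<n}-{j}. g k (\<mu> k)) + g j t" for g :: "nat \<Rightarrow> real \<Rightarrow> real" and t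
    using assms(2) by (simp add: sum.remove[of "{..<n}" j] add.commute)
  define S where "S i = (\<Sum>k\<in>{..<n}-{j}. exp (- (\<kappa> i k + \<mu> k) / \<epsilon>))" for i
  define H where "H = (\<Sum>k\<in>{..<n}-{j}. c k * ln (1 - \<mu> k / T))"
  have S: "0 \<le> S i" for i unfolding S_def by (intro sum_nonneg) auto
  have lagr: "lagrangian r (\<mu>(j := t))
      = (\<Sum>i<m. r i * (- \<epsilon> * ln (S i + exp (- (\<kappa> i j + t) / \<epsilon>))) - U i (r i)) + (H + c j * ln (1 - t / T))" for t
    unfolding lagrangian_eq phi_def barrier_def split[of "\<lambda>k v. exp (- (\<kappa> _ k + v) / \<epsilon>)"]
      split[of "\<lambda>k v. c k * ln (1 - v / T)"] S_def H_def ..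
  have Z: "(\<Sum>k<n. exp (- (\<kappa> i k + \<mu> k) / \<epsilon>)) = S i + exp (- (\<kappa> i j + \<mu> j) / \<epsilon>)" for i
    unfolding S_def using split[of "\<lambda>k v. exp (- (\<kappa> i k + v) / \<epsilon>)" "\<mu> j"] by simp
  have "(1 - \<mu> j / T) * T = T - \<mu> j" using T_pos by (simp add: field_simps)
  then show ?thesis
    unfolding lagr gibbs_plan_def Z using M_memD[OF assms] S \<epsilon>_pos T_pos
    by (auto intro!: derivative_eq_intros has_real_derivative_neg_ln_add_exp has_real_derivative_ln_one_minus
        simp: add_nonneg_pos mult.commute)
qed

text \<open>The first-order conditions at a maximiser over \<mu> j \<in> [0, T) are exactly the equality case
  of Fenchel-Young for beta.\<close>
lemma optimal_price_complementarity:
  assumes r: "r \<in> R" and \<mu>: "\<mu> \<in> M" and max: "\<forall>\<nu>\<in>M. lagrangian r \<nu> \<le> lagrangian r \<mu>" and j: "j < n"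
  shows "beta (c j) (T * (\<Sum>i<m. gibbs_plan r \<mu> i j))
         = \<mu> j * (\<Sum>i<m. gibbs_plan r \<mu> i j) + c j * ln (1 - \<mu> j / T)"
proof -
  have "\<forall>t\<in>{0..<T}. lagrangian r (\<mu>(j := t)) \<le> lagrangian r (\<mu>(j := \<mu> j))"
    using max \<mu> j by (auto simp: PiE_iff extensional_def)
  note kkt = has_real_derivative_at_max_on_Ico[OF lagrangian_fun_upd_deriv[OF \<mu> j] _ this]
  show ?thesis
    using kkt M_memD[OF \<mu> j] c_pos[OF j] T_pos by (intro beta_fenchel_young_eq) auto
qed

definition saddle_point :: "(nat \<Rightarrow> real) \<Rightarrow> (nat \<Rightarrow> real) \<Rightarrow> bool" where
  "saddle_point r \<mu> \<longleftrightarrow> r \<in> R \<and> \<mu> \<in> M \<and>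
     (\<forall>r'\<in>R. \<forall>\<nu>\<in>M. lagrangian r \<nu> \<le> lagrangian r \<mu> \<and> lagrangian r \<mu> \<le> lagrangian r' \<mu>)"

lemma saddle_point_best_demand: "saddle_point r \<mu> \<Longrightarrow> r = best_demand \<mu>"
  unfolding saddle_point_def using best_demand_in_R by (blast intro: best_demand_unique)

lemma saddle_point_unique: "\<exists>rs \<mu>s. \<forall>r \<mu>. saddle_point r \<mu> \<longleftrightarrow> (r, \<mu>) = (rs, \<mu>s)"
proof -
  obtain \<mu>s where \<mu>s: "\<mu>s \<in> M" and max: "\<forall>\<nu>\<in>M. lagrangian (best_demand \<mu>s) \<nu> \<le> lagrangian (best_demand \<mu>s) \<mu>s"
    by (rule saddle_point_exists)
  define rs where "rs = best_demand \<mu>s"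
  have "rs \<in> R" unfolding rs_def by (rule best_demand_in_R)
  have saddle: "saddle_point rs \<mu>s"
    unfolding saddle_point_def using \<open>rs \<in> R\<close> \<mu>s max best_demand_le unfolding rs_def by simp
  have "r = rs \<and> \<mu> = \<mu>s" if "saddle_point r \<mu>" for r \<mu>
  proof
    have r: "r \<in> R" and \<mu>: "\<mu> \<in> M"
      and "\<forall>r'\<in>R. \<forall>\<nu>\<in>M. lagrangian r \<nu> \<le> lagrangian r \<mu> \<and> lagrangian r \<mu> \<le> lagrangian r' \<mu>"
      using that unfolding saddle_point_def by auto
    from this(3)[rule_format, OF \<open>rs \<in> R\<close> \<mu>s] saddle[unfolded saddle_point_def, THEN conjunct2, THEN conjunct2,
        rule_format, OF r \<mu>]
    have eq: "lagrangian r \<mu>s = lagrangian rs \<mu>s" "lagrangian rs \<mu> = lagrangian rs \<mu>s" by linarith+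
    then show "r = rs" unfolding rs_def using r by (simp add: best_demand_unique)
    show "\<mu> = \<mu>s"
    proof (rule ccontr)
      assume "\<mu> \<noteq> \<mu>s"
      with \<open>rs \<in> R\<close> \<mu> \<mu>s
      have "(lagrangian rs \<mu> + lagrangian rs \<mu>s) / 2 < lagrangian rs (convex_comb (1/2) \<mu> \<mu>s)"
        by (rule lagrangian_midpoint_strict)
      moreover have "convex_comb (1/2) \<mu> \<mu>s \<in> M" using \<mu> \<mu>s by (intro convex_comb_in_M) auto
      then have "lagrangian rs (convex_comb (1/2) \<mu> \<mu>s) \<le> lagrangian rs \<mu>s"
        using saddle \<open>rs \<in> R\<close> unfolding saddle_point_def by blast
      ultimately show False using eq by simp
    qed
  qed
  then show ?thesis using saddle by blast
qed

abbreviation \<psi> :: "(nat \<Rightarrow> real) \<Rightarrow> real" where "\<psi> \<equiv> psi n m c T \<epsilon> \<kappa> U"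

lemma lagrangian_le_psi:
  assumes "r \<in> R" "\<mu> \<in> M"
  shows "lagrangian r \<mu> \<le> \<psi> r"
proof -
  have "(\<Sum>i<m. r i * \<phi> i \<mu>) + barrier \<mu> \<le> Cmin n m c T \<epsilon> \<kappa> r"
    unfolding Cmin_def using gibbs_plan_feasible[OF assms(1)] weak_duality[OF assms(2)]
    by (intro cINF_greatest) auto
  then show ?thesis unfolding psi_def lagrangian_eq by (simp add: sum_subtractf)
qed

lemma psi_saddle_point:
  assumes "saddle_point rs \<mu>s"
  shows "\<psi> rs = lagrangian rs \<mu>s"
proof -
  have rs: "rs \<in> R" and \<mu>s: "\<mu>s \<in> M" and max: "\<forall>\<nu>\<in>M. lagrangian rs \<nu> \<le> lagrangian rs \<mu>s"
    using assms unfolding saddle_point_def by auto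
  have "Cmin n m c T \<epsilon> \<kappa> rs \<le> cost n m c T \<epsilon> \<kappa> rs (gibbs_plan rs \<mu>s)"
    unfolding Cmin_def using gibbs_plan_feasible[OF rs] weak_duality[OF \<mu>s]
    by (intro cINF_lower bdd_belowI2[where m = "(\<Sum>i<m. rs i * \<phi> i \<mu>s) + barrier \<mu>s"]) auto
  also have "\<dots> = (\<Sum>i<m. rs i * \<phi> i \<mu>s) + barrier \<mu>s"
    using rs \<mu>s max by (intro strong_duality optimal_price_complementarity)
  finally have "\<psi> rs \<le> lagrangian rs \<mu>s" unfolding psi_def lagrangian_eq by (simp add: sum_subtractf)
  then show ?thesis using lagrangian_le_psi[OF rs \<mu>s] by simp
qed

lemma saddle_point_argmin_psi:
  assumes "saddle_point rs \<mu>s"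
  shows "{r \<in> R. \<forall>r'\<in>R. \<psi> r \<le> \<psi> r'} = {rs}"
proof -
  have rs: "rs \<in> R" and \<mu>s: "\<mu>s \<in> M" and min: "\<forall>r\<in>R. lagrangian rs \<mu>s \<le> lagrangian r \<mu>s"
    using assms unfolding saddle_point_def by auto
  have "\<psi> rs \<le> \<psi> r" if "r \<in> R" for r
    using psi_saddle_point[OF assms] min lagrangian_le_psi[OF that \<mu>s] that by force
  moreover have "r = rs" if "r \<in> R" "\<psi> r \<le> \<psi> rs" for r
  proof -
    have "lagrangian r \<mu>s \<le> lagrangian (best_demand \<mu>s) \<mu>s"
      using lagrangian_le_psi[OF that(1) \<mu>s] that(2) psi_saddle_point[OF assms]
        saddle_point_best_demand[OF assms] by simp
    then show ?thesis using saddle_point_best_demand[OF assms] best_demand_unique[OF that(1)] by simp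
  qed
  ultimately show ?thesis using rs by (auto intro: order_antisym)
qed

end

theorem proposition5:
  fixes n m :: nat and c rbar :: "nat \<Rightarrow> real" and T \<epsilon> :: real
    and \<kappa> :: "nat \<Rightarrow> nat \<Rightarrow> real" and U :: "nat \<Rightarrow> real \<Rightarrow> real"
  assumes "n \<ge> 1" and "m \<ge> 1"
    and "\<forall>j<n. c j > 0" and "T > 0" and "\<epsilon> > 0"
    and "\<forall>i<m. \<forall>j<n. \<kappa> i j \<ge> 0"
    and "\<forall>i<m. rbar i > 0"
    and "\<forall>i<m. continuous_on {0..rbar i} (U i)"
    and "\<forall>i<m. mono_on {0..rbar i} (U i)"
    and "\<forall>i<m. strict_concave_on {0..rbar i} (U i)"
  defines "R \<equiv> (\<Pi>\<^sub>E i\<in>{..<m}. {0..rbar i})"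
    and "M \<equiv> (\<Pi>\<^sub>E j\<in>{..<n}. {0..<T})"
  shows "\<exists>rs \<mu>s.
           (\<forall>p. (fst p \<in> R \<and> snd p \<in> M \<and>
                  (\<forall>r\<in>R. \<forall>\<mu>\<in>M. W n m c T \<epsilon> \<kappa> U (fst p) \<mu> \<le> W n m c T \<epsilon> \<kappa> U (fst p) (snd p)
                        \<and> W n m c T \<epsilon> \<kappa> U (fst p) (snd p) \<le> W n m c T \<epsilon> \<kappa> U r (snd p)))
                 \<longleftrightarrow> p = (rs, \<mu>s))
         \<and> {r \<in> R. \<forall>r'\<in>R. psi n m c T \<epsilon> \<kappa> U r \<le> psi n m c T \<epsilon> \<kappa> U r'} = {rs}"
proof -
  interpret charging_market n m c rbar T \<epsilon> \<kappa> U
    using assms by unfold_locales auto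
  obtain rs \<mu>s where saddle_iff: "\<And>r \<mu>. saddle_point r \<mu> \<longleftrightarrow> (r, \<mu>) = (rs, \<mu>s)"
    using saddle_point_unique by blast
  then have "saddle_point rs \<mu>s" by simp
  have "saddle_point (fst p) (snd p) \<longleftrightarrow> p = (rs, \<mu>s)" for p
    using saddle_iff[of "fst p" "snd p"] by simp
  then show ?thesis
    using saddle_point_argmin_psi[OF \<open>saddle_point rs \<mu>s\<close>]
    unfolding R_def M_def saddle_point_def by blast
qed

end
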